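(* Let $\lambda>0$ and $S\in(0,\lambda]$ be a given spot price. For a company $j$ with parameters $\pi^0_j,\pi^1_j,\gamma_j>0$, $\mathrm{E}^{\mathrm{bau}}_j=\pi^0_j/\pi^1_j$, $\varrho_j=1/\pi^1_j+1/\gamma_j$ and $\lambda\varrho_j<\mathrm{E}^{\mathrm{bau}}_j$: (1) If company $c$ purchases certificates directly at the auction, its optimal demand is $\bm{\delta_c}(\bm{P_c}(S))=\bm{\delta_c}(S)=\mathrm{E}^{\mathrm{bau}}_c-S\varrho_c$. (2) If company $b$ purchases certificates through a financial intermediary, the intermediated price is $\bm{P_b}(S)=\tfrac12\big(S+\mathrm{E}^{\mathrm{bau}}_b/\varrho_b\big)\wedge\lambda$ and the resulting demand is $\bm{\delta_b}(\bm{P_b}(S))=\tfrac12(\mathrm{E}^{\mathrm{bau}}_b-S\varrho_b)\vee(\mathrm{E}^{\mathrm{bau}}_b-\lambda\varrho_b)$.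
   Context: Company $j$ facing certificate price $P$ maximizes $\pi^0_jq-\tfrac{\pi^1_j}2q^2-\tfrac{\gamma_j}2[(1-e^{-a})q]^2-\delta P-\lambda(e^{-a}q-\delta)^+$ over $(q,a,\delta)$; its optimal demand is $\bm{\delta_j}(P)=\mathrm{E}^{\mathrm{bau}}_j-P\varrho_j$. A company buying directly faces $\bm{P_c}(S)=S$. An intermediary buying at spot price $S$ sets the price $\bm{P_b}(S)$ maximizing its wealth $\bm{\delta_b}(P)(P-S)$ over the admissible interval $P\in[S,\lambda]$. $x\wedge y=\min(x,y)$, $x\vee y=\max(x,y)$. *)

theory Defs
  imports Complex_Main
begin

text \<open>Company parameters: p0 = pi^0_j, p1 = pi^1_j, g = gamma_j; lam = penalty lambda.\<close>

definition Ebau :: "real \<Rightarrow> real \<Rightarrow> real" where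
  "Ebau p0 p1 = p0 / p1"

definition rho :: "real \<Rightarrow> real \<Rightarrow> real" where
  "rho p1 g = 1 / p1 + 1 / g"

text \<open>The company's objective (wealth) at certificate price P, for production q,
  abatement effort a and certificate purchase d.\<close>
definition profit :: "real \<Rightarrow> real \<Rightarrow> real \<Rightarrow> real \<Rightarrow> real \<Rightarrow> real \<Rightarrow> real \<Rightarrow> real \<Rightarrow> real" where
  "profit p0 p1 g lam P q a d =
     p0 * q - p1 / 2 * q\<^sup>2 - g / 2 * ((1 - exp (- a)) * q)\<^sup>2 - d * P
     - lam * max (exp (- a) * q - d) 0"

definition is_optimal_demand :: "real \<Rightarrow> real \<Rightarrow> real \<Rightarrow> real \<Rightarrow> real \<Rightarrow> real \<Rightarrow> bool" where
  "is_optimal_demand p0 p1 g lam P d \<longleftrightarrow>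
     (\<exists>q a. q \<ge> 0 \<and> a \<ge> 0 \<and>
        (\<forall>q' a' d'. q' \<ge> 0 \<longrightarrow> a' \<ge> 0 \<longrightarrow>
           profit p0 p1 g lam P q' a' d' \<le> profit p0 p1 g lam P q a d))"

definition demand :: "real \<Rightarrow> real \<Rightarrow> real \<Rightarrow> real \<Rightarrow> real" where
  "demand p0 p1 g P = Ebau p0 p1 - P * rho p1 g"

definition Pc :: "real \<Rightarrow> real" where
  "Pc S = S"

definition is_intermediary_price :: "real \<Rightarrow> real \<Rightarrow> real \<Rightarrow> real \<Rightarrow> real \<Rightarrow> real \<Rightarrow> bool" where
  "is_intermediary_price p0 p1 g lam S P \<longleftrightarrow>
     P \<in> {S..lam} \<and>
     (\<forall>P'\<in>{S..lam}. demand p0 p1 g P' * (P' - S) \<le> demand p0 p1 g P * (P - S))"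

end

theory Submission
  imports Defs
begin

text \<open>Buying certificates at a price \<open>P \<le> \<lambda>\<close> is never worse than paying the penalty, so an
  optimal company covers its residual emissions \<open>exp (-a) q\<close> exactly. Its wealth then splits
  into two concave quadratics, one in the production \<open>q\<close> and one in the abated quantity
  \<open>x = (1 - exp (-a)) q\<close>, maximised at \<open>q = (\<pi>\<^sup>0 - P) / \<pi>\<^sup>1\<close> and \<open>x = P / \<gamma>\<close>; the
  residual emissions \<open>q - x\<close> are then \<open>E\<^sup>b\<^sup>a\<^sup>u - P \<rho>\<close>. The intermediary's wealth
  \<open>(E\<^sup>b\<^sup>a\<^sup>u - P \<rho>) (P - S)\<close> is a concave parabola in \<open>P\<close> with vertex
  \<open>(S + E\<^sup>b\<^sup>a\<^sup>u / \<rho>) / 2 > S\<close>, so its unique maximiser on \<open>[S, \<lambda>]\<close> is that vertex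
  clipped at \<open>\<lambda>\<close>.\<close>

lemma rho_pos: "p1 > 0 \<Longrightarrow> g > 0 \<Longrightarrow> rho p1 g > 0"
  unfolding rho_def by (simp add: add_pos_pos)

lemma quadratic_le_vertex:
  fixes b c t :: real
  assumes "c > 0"
  shows "b * t - c / 2 * t\<^sup>2 \<le> b * (b / c) - c / 2 * (b / c)\<^sup>2"
proof -
  have "b * (b / c) - c / 2 * (b / c)\<^sup>2 - (b * t - c / 2 * t\<^sup>2) = c / 2 * (t - b / c)\<^sup>2"
    using assms by (simp add: power2_eq_square field_simps)
  also have "\<dots> \<ge> 0" using assms by simp
  finally show ?thesis by simp
qed

lemma certificate_cost_ge:
  fixes P lam d e :: real
  assumes "0 \<le> P" "P \<le> lam"
  shows "P * e \<le> d * P + lam * max (e - d) 0"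
proof (cases "d \<ge> e")
  case True
  then show ?thesis using assms(1) by (simp add: mult_left_mono mult.commute)
next
  case False
  then have "P * (e - d) \<le> lam * (e - d)" using assms(2) by (simp add: mult_right_mono)
  then show ?thesis using False by (simp add: algebra_simps)
qed

lemma profit_le_separated:
  fixes p0 p1 g lam P q a d :: real
  assumes "0 \<le> P" "P \<le> lam"
  defines "x \<equiv> (1 - exp (- a)) * q"
  shows "profit p0 p1 g lam P q a d
           \<le> ((p0 - P) * q - p1 / 2 * q\<^sup>2) + (P * x - g / 2 * x\<^sup>2)"
proof -
  have emissions: "exp (- a) * q = q - x" unfolding x_def by (simp add: algebra_simps)
  have "P * (q - x) \<le> d * P + lam * max (q - x - d) 0"
    using certificate_cost_ge[OF assms(1,2)] .
  then show ?thesis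
    unfolding profit_def x_def[symmetric] emissions by (simp add: algebra_simps)
qed

lemma is_optimal_demand_demand:
  fixes p0 p1 g lam P :: real
  assumes "p1 > 0" "g > 0" "0 \<le> P" "P \<le> lam"
    and "P * rho p1 g < Ebau p0 p1"
  shows "is_optimal_demand p0 p1 g lam P (demand p0 p1 g P)"
proof -
  define y where "y = demand p0 p1 g P"
  define x where "x = P / g"
  define q where "q = (p0 - P) / p1"
  have "y > 0" using assms(5) unfolding y_def demand_def by simp
  have "x \<ge> 0" using assms(2,3) unfolding x_def by simp
  have q_eq: "q = x + y"
    unfolding q_def x_def y_def demand_def Ebau_def rho_def using assms(1,2)
    by (simp add: field_simps)
  define a where "a = ln (q / y)"
  have "a \<ge> 0" unfolding a_def using q_eq \<open>y > 0\<close> \<open>x \<ge> 0\<close> by simp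
  have "exp (- a) = y / q"
    unfolding a_def using q_eq \<open>y > 0\<close> \<open>x \<ge> 0\<close> by (simp add: ln_div exp_diff)
  then have emissions: "exp (- a) * q = y" using q_eq \<open>y > 0\<close> \<open>x \<ge> 0\<close> by simp
  have abated: "(1 - exp (- a)) * q = x" using emissions q_eq by (simp add: algebra_simps)
  have optimum: "profit p0 p1 g lam P q a y
                   = ((p0 - P) * q - p1 / 2 * q\<^sup>2) + (P * x - g / 2 * x\<^sup>2)"
    unfolding profit_def emissions abated using q_eq by (simp add: algebra_simps)
  show ?thesis
    unfolding is_optimal_demand_def y_def[symmetric]
  proof (intro exI conjI allI impI)
    show "q \<ge> 0" using q_eq \<open>y > 0\<close> \<open>x \<ge> 0\<close> by simp
    show "a \<ge> 0" by fact
    fix q' a' d' :: real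
    assume "q' \<ge> 0" "a' \<ge> 0"
    define x' where "x' = (1 - exp (- a')) * q'"
    have "profit p0 p1 g lam P q' a' d'
            \<le> ((p0 - P) * q' - p1 / 2 * q'\<^sup>2) + (P * x' - g / 2 * x'\<^sup>2)"
      unfolding x'_def using profit_le_separated[OF assms(3,4)] .
    also have "\<dots> \<le> ((p0 - P) * q - p1 / 2 * q\<^sup>2) + (P * x - g / 2 * x\<^sup>2)"
      unfolding q_def x_def
      using quadratic_le_vertex[OF assms(1)] quadratic_le_vertex[OF assms(2)] by (rule add_mono)
    finally show "profit p0 p1 g lam P q' a' d' \<le> profit p0 p1 g lam P q a y"
      unfolding optimum .
  qed
qed

lemma intermediary_wealth_eq:
  fixes E r S P :: real
  assumes "r > 0"
  shows "(E - P * r) * (P - S) = r * (((S + E / r) / 2 - S)\<^sup>2 - (P - (S + E / r) / 2)\<^sup>2)"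
  using assms by (simp add: power2_eq_square field_simps)

lemma clamp_nearest_in_interval:
  fixes S lam v P :: real
  assumes "P \<in> {S..lam}"
  shows "(max S (min v lam) - v)\<^sup>2 \<le> (P - v)\<^sup>2"
    and "(P - v)\<^sup>2 \<le> (max S (min v lam) - v)\<^sup>2 \<Longrightarrow> P = max S (min v lam)"
proof -
  have "\<bar>max S (min v lam) - v\<bar> \<le> \<bar>P - v\<bar>" using assms by auto
  then show "(max S (min v lam) - v)\<^sup>2 \<le> (P - v)\<^sup>2" by (simp add: abs_le_square_iff)
  assume "(P - v)\<^sup>2 \<le> (max S (min v lam) - v)\<^sup>2"
  then have "\<bar>P - v\<bar> \<le> \<bar>max S (min v lam) - v\<bar>" by (simp add: abs_le_square_iff)
  then show "P = max S (min v lam)" using assms by (auto split: if_splits)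
qed

lemma is_intermediary_price_iff:
  fixes p0 p1 g lam S P :: real
  assumes "p1 > 0" "g > 0" "S \<le> lam" "lam * rho p1 g < Ebau p0 p1"
  shows "is_intermediary_price p0 p1 g lam S P
           \<longleftrightarrow> P = min ((S + Ebau p0 p1 / rho p1 g) / 2) lam"
proof -
  define r where "r = rho p1 g"
  define v where "v = (S + Ebau p0 p1 / r) / 2"
  have "r > 0" unfolding r_def using assms(1,2) by (rule rho_pos)
  have "lam < Ebau p0 p1 / r" using assms(4) \<open>r > 0\<close> unfolding r_def by (simp add: field_simps)
  then have clamp: "max S (min v lam) = min v lam" unfolding v_def using assms(3) by auto
  have wealth: "demand p0 p1 g P' * (P' - S) = r * ((v - S)\<^sup>2 - (P' - v)\<^sup>2)" for P'
    unfolding demand_def v_def r_def[symmetric] using intermediary_wealth_eq[OF \<open>r > 0\<close>] .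
  have "is_intermediary_price p0 p1 g lam S P
          \<longleftrightarrow> P \<in> {S..lam} \<and> (\<forall>P'\<in>{S..lam}. (P - v)\<^sup>2 \<le> (P' - v)\<^sup>2)"
    unfolding is_intermediary_price_def wealth using \<open>r > 0\<close> by simp
  also have "\<dots> \<longleftrightarrow> P = min v lam"
  proof
    have "min v lam \<in> {S..lam}"
      using clamp assms(3) by (metis atLeastAtMost_iff max.cobounded1 min.cobounded2)
    moreover assume "P \<in> {S..lam} \<and> (\<forall>P'\<in>{S..lam}. (P - v)\<^sup>2 \<le> (P' - v)\<^sup>2)"
    ultimately show "P = min v lam" using clamp_nearest_in_interval(2)[of P S lam v] clamp by simp
  next
    assume "P = min v lam"
    then show "P \<in> {S..lam} \<and> (\<forall>P'\<in>{S..lam}. (P - v)\<^sup>2 \<le> (P' - v)\<^sup>2)"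
      using clamp_nearest_in_interval(1)[of _ S lam v] clamp assms(3) by auto
  qed
  finally show ?thesis unfolding v_def r_def .
qed

lemma demand_min:
  fixes p0 p1 g P P' :: real
  assumes "p1 > 0" "g > 0"
  shows "demand p0 p1 g (min P P') = max (demand p0 p1 g P) (demand p0 p1 g P')"
  using rho_pos[OF assms] unfolding demand_def
  by (cases "P \<le> P'") (simp_all add: max_def mult_right_mono)

theorem propositionA1:
  fixes lam S p0c p1c gc p0b p1b gb :: real
  assumes "lam > 0" and "0 < S" and "S \<le> lam"
    and "p0c > 0" and "p1c > 0" and "gc > 0"
    and "lam * rho p1c gc < Ebau p0c p1c"
    and "p0b > 0" and "p1b > 0" and "gb > 0"
    and "lam * rho p1b gb < Ebau p0b p1b"
  shows "is_optimal_demand p0c p1c gc lam (Pc S) (demand p0c p1c gc (Pc S))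
       \<and> demand p0c p1c gc (Pc S) = demand p0c p1c gc S
       \<and> demand p0c p1c gc S = Ebau p0c p1c - S * rho p1c gc
       \<and> {P. is_intermediary_price p0b p1b gb lam S P}
           = {min ((S + Ebau p0b p1b / rho p1b gb) / 2) lam}
       \<and> is_optimal_demand p0b p1b gb lam (min ((S + Ebau p0b p1b / rho p1b gb) / 2) lam)
           (demand p0b p1b gb (min ((S + Ebau p0b p1b / rho p1b gb) / 2) lam))
       \<and> demand p0b p1b gb (min ((S + Ebau p0b p1b / rho p1b gb) / 2) lam)
           = max ((Ebau p0b p1b - S * rho p1b gb) / 2) (Ebau p0b p1b - lam * rho p1b gb)"
proof -
  define Pb where "Pb = min ((S + Ebau p0b p1b / rho p1b gb) / 2) lam"
  have "rho p1c gc > 0" "rho p1b gb > 0" using assms rho_pos by simp_all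
  have "S * rho p1c gc \<le> lam * rho p1c gc"
    using assms(3) \<open>rho p1c gc > 0\<close> by (simp add: mult_right_mono)
  then have direct: "is_optimal_demand p0c p1c gc lam S (demand p0c p1c gc S)"
    using assms by (intro is_optimal_demand_demand) auto
  have price: "{P. is_intermediary_price p0b p1b gb lam S P} = {Pb}"
    using is_intermediary_price_iff[OF assms(9,10,3,11)] unfolding Pb_def by blast
  then have "S \<le> Pb" "Pb \<le> lam" unfolding is_intermediary_price_def by auto
  then have "Pb * rho p1b gb \<le> lam * rho p1b gb"
    using \<open>rho p1b gb > 0\<close> by (simp add: mult_right_mono)
  then have intermediated: "is_optimal_demand p0b p1b gb lam Pb (demand p0b p1b gb Pb)"
    using assms \<open>S \<le> Pb\<close> \<open>Pb \<le> lam\<close> by (intro is_optimal_demand_demand) auto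
  have vertex_demand: "demand p0b p1b gb ((S + Ebau p0b p1b / rho p1b gb) / 2)
                         = (Ebau p0b p1b - S * rho p1b gb) / 2"
    unfolding demand_def using \<open>rho p1b gb > 0\<close> by (simp add: field_simps)
  have "demand p0b p1b gb Pb
          = max ((Ebau p0b p1b - S * rho p1b gb) / 2) (Ebau p0b p1b - lam * rho p1b gb)"
    unfolding Pb_def demand_min[OF assms(9,10)] vertex_demand by (simp only: demand_def)
  with direct price intermediated show ?thesis unfolding Pb_def Pc_def by (simp add: demand_def)
qed

end
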